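(* Let $S$ be as in the context, $1\le k<n$, and let $\zeta\in\mathcal{T}_k(S)$ be a node that has exactly one child $\phi$. (1) If $\zeta$ has a unique Weiner link, then $w_{k+1}(\phi)=1$. (2) If $\zeta$ has multiple Weiner links, then $w_{k+1}(\phi)=w_k(\zeta)$.
   Context: $\Sigma$ is a finite totally ordered alphabet containing a symbol $\$$ smaller than every other symbol. $S$ is a string of length $n\ge 2$ over $\Sigma$ whose last character is $\$$ and in which $\$$ occurs nowhere else. The rotations of $S$ are the $n$ strings $S[i..n]S[1..i-1]$, $i\in[1,n]$. The rotation-trie $\mathcal{T}(S)$ is the trie of the set of rotations of $S$ (a rooted tree with single-character edge labels, children of a node having distinct labels, ordered by increasing label). The label $l(\phi)$ of a node is the concatenation of edge labels on the root-to-$\phi$ path, its level is $|l(\phi)|$, leaves are the nodes at level $n$, $|\phi|$ is the number of leaves in the subtree rooted at $\phi$, and $\mathcal{T}_k(S)$ is the set of nodes at level $k$. Siblings are distinct nodes with the same parent. A triple $(\phi,\varphi,c)$ is a Weiner link of $\phi$ if $l(\varphi)=c\,l(\phi)$, or $|l(\phi)|=n$ and $l(\varphi)=c\,l(\phi)[1..n-1]$. $\phi$ has a unique Weiner link if all its Weiner links have the same target node, and multiple Weiner links otherwise. For $\phi\in\mathcal{T}_k(S)$ define $w_k(\phi)=1$ if $\phi$ has a unique Weiner link $(\phi,\varphi,c)$ and $\varphi$ has no siblings, and $w_k(\phi)=|\phi|$ otherwise. *)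

theory Defs
  imports Main "HOL-Library.Sublist"
begin

text \<open>Strings are lists; the alphabet is the type 'a (finite, linearly ordered).
  Nodes of the rotation trie are identified with their labels.\<close>

definition rotations :: "'a list \<Rightarrow> 'a list set" where
  "rotations S = {drop i S @ take i S | i. i < length S}"

definition trie_nodes :: "'a list \<Rightarrow> 'a list set" where
  "trie_nodes S = {p. \<exists>r \<in> rotations S. prefix p r}"

definition trie_level :: "'a list \<Rightarrow> nat \<Rightarrow> 'a list set" where
  "trie_level S k = {p \<in> trie_nodes S. length p = k}"

definition leaf_count :: "'a list \<Rightarrow> 'a list \<Rightarrow> nat" where
  "leaf_count S p = card {q \<in> trie_nodes S. length q = length S \<and> prefix p q}"

definition children :: "'a list \<Rightarrow> 'a list \<Rightarrow> 'a list set" where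
  "children S p = {q \<in> trie_nodes S. \<exists>c. q = p @ [c]}"

definition has_siblings :: "'a list \<Rightarrow> 'a list \<Rightarrow> bool" where
  "has_siblings S q \<longleftrightarrow> q \<noteq> [] \<and>
     (\<exists>q' \<in> trie_nodes S. q' \<noteq> [] \<and> q' \<noteq> q \<and> butlast q' = butlast q)"

definition weiner_link :: "'a list \<Rightarrow> 'a list \<Rightarrow> 'a list \<Rightarrow> 'a \<Rightarrow> bool" where
  "weiner_link S p q c \<longleftrightarrow> p \<in> trie_nodes S \<and> q \<in> trie_nodes S \<and>
     (q = c # p \<or> (length p = length S \<and> q = c # butlast p))"

definition unique_weiner :: "'a list \<Rightarrow> 'a list \<Rightarrow> bool" where
  "unique_weiner S p \<longleftrightarrow>
     (\<forall>q c q' c'. weiner_link S p q c \<and> weiner_link S p q' c' \<longrightarrow> q = q')"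

definition multiple_weiner :: "'a list \<Rightarrow> 'a list \<Rightarrow> bool" where
  "multiple_weiner S p \<longleftrightarrow> \<not> unique_weiner S p"

text \<open>w_k(p) for p at level k (the value does not depend on k beyond p's level).\<close>
definition wk :: "'a list \<Rightarrow> nat \<Rightarrow> 'a list \<Rightarrow> nat" where
  "wk S k p = (if unique_weiner S p \<and> (\<exists>q c. weiner_link S p q c \<and> \<not> has_siblings S q)
               then 1 else leaf_count S p)"

end

theory Submission
  imports Defs "HOL-Library.Multiset"
begin

text \<open>Let \<open>\<zeta>c\<close> be the only child of \<open>\<zeta>\<close>. Every leaf below \<open>\<zeta>\<close> lies below
  \<open>\<zeta>c\<close>, so both nodes have the same number of leaves. If \<open>d\<zeta>\<close> is a node, it extends
  to the right, and the extension must be \<open>d\<zeta>c\<close> because its suffix \<open>\<zeta>e\<close> is a child of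
  \<open>\<zeta>\<close>; hence \<open>\<zeta>\<close> and \<open>\<zeta>c\<close> have Weiner links with the same characters, and one
  has a unique Weiner link iff the other does. In the unique case the target \<open>d\<zeta>c\<close> has no
  siblings by the same argument; at the last level the target \<open>d\<zeta>\<close> is a rotation, which is
  determined by all but its last character.\<close>

lemma rotations_eq_range_rotate:
  assumes "S \<noteq> []"
  shows "rotations S = range (\<lambda>i. rotate i S)"
proof (intro equalityI subsetI)
  fix r assume "r \<in> rotations S"
  then obtain i where "i < length S" "r = drop i S @ take i S"
    unfolding rotations_def by blast
  then have "r = rotate i S"
    by (simp add: rotate_drop_take)
  then show "r \<in> range (\<lambda>i. rotate i S)" by blast
next
  fix r assume "r \<in> range (\<lambda>i. rotate i S)"
  then obtain i where "r = drop (i mod length S) S @ take (i mod length S) S"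
    by (auto simp: rotate_drop_take)
  then show "r \<in> rotations S"
    using assms unfolding rotations_def by auto
qed

lemma rotations_Nil [simp]: "rotations [] = {}"
  by (simp add: rotations_def)

lemma length_rotations: "r \<in> rotations S \<Longrightarrow> length r = length S"
  by (auto simp: rotations_def)

lemma mset_rotate: "mset (rotate n xs) = mset xs"
  by (metis append_take_drop_id mset_append rotate_drop_take add.commute)

lemma mset_rotations:
  assumes "r \<in> rotations S"
  shows "mset r = mset S"
proof -
  have "S \<noteq> []"
    using assms by auto
  with assms show ?thesis
    by (auto simp: rotations_eq_range_rotate mset_rotate)
qed

lemma rotate_in_rotations:
  assumes "r \<in> rotations S"
  shows "rotate m r \<in> rotations S"
proof -
  have "S \<noteq> []"
    using assms by auto
  with assms show ?thesis
    by (auto simp: rotations_eq_range_rotate rotate_rotate)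
qed

lemma trie_nodes_prefix_closed: "q \<in> trie_nodes S \<Longrightarrow> prefix p q \<Longrightarrow> p \<in> trie_nodes S"
  unfolding trie_nodes_def using prefix_order.trans by blast

lemma length_trie_node_le:
  assumes "p \<in> trie_nodes S"
  shows "length p \<le> length S"
proof -
  obtain r where "r \<in> rotations S" "prefix p r"
    using assms unfolding trie_nodes_def by blast
  then show ?thesis
    using prefix_length_le length_rotations by fastforce
qed

lemma trie_nodes_ConsD: "x # p \<in> trie_nodes S \<Longrightarrow> p \<in> trie_nodes S"
proof -
  assume "x # p \<in> trie_nodes S"
  then obtain r0 where r0: "r0 \<in> rotations S" "prefix (x # p) r0"
    unfolding trie_nodes_def by blast
  then obtain r where r: "r0 = x # r" "prefix p r"
    by (cases r0) auto
  have "rotate 1 (x # r) = r @ [x]" by simp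
  then have "r @ [x] \<in> rotations S"
    using rotate_in_rotations[OF r0(1)] r(1) by metis
  moreover have "prefix p (r @ [x])"
    using r(2) by simp
  ultimately show "p \<in> trie_nodes S"
    unfolding trie_nodes_def by blast
qed

lemma trie_node_snoc_exists:
  assumes "p \<in> trie_nodes S" "length p < length S"
  obtains e where "p @ [e] \<in> trie_nodes S"
proof -
  obtain r where r: "r \<in> rotations S" "prefix p r"
    using assms(1) unfolding trie_nodes_def by blast
  then obtain t where t: "r = p @ t"
    by (auto simp: prefix_def)
  with assms(2) length_rotations[OF r(1)] obtain e t' where "t = e # t'"
    by (cases t) auto
  with r t have "prefix (p @ [e]) r" by simp
  with r(1) show thesis
    using that unfolding trie_nodes_def by blast
qed

lemma trie_node_Cons_exists:
  assumes "p \<in> trie_nodes S" "length p < length S"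
  obtains d where "d # p \<in> trie_nodes S"
proof -
  obtain r where r: "r \<in> rotations S" "prefix p r"
    using assms(1) unfolding trie_nodes_def by blast
  have ne: "r \<noteq> []" and "p \<noteq> r"
    using length_rotations[OF r(1)] assms(2) by auto
  with r(2) have "prefix p (butlast r)"
    by (metis append_butlast_last_id prefix_snoc)
  moreover have "last r # butlast r = rotate (length (butlast r)) r"
    using ne by (metis append_butlast_last_id append_Cons append_Nil rotate_append)
  ultimately have "prefix (last r # p) (rotate (length (butlast r)) r)"
    by (metis Cons_prefix_Cons)
  with rotate_in_rotations[OF r(1)] show thesis
    using that unfolding trie_nodes_def by blast
qed

lemma trie_node_full_length_in_rotations:
  assumes "p \<in> trie_nodes S" "length p = length S"
  shows "p \<in> rotations S"
proof -
  obtain r where r: "r \<in> rotations S" "prefix p r"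
    using assms(1) unfolding trie_nodes_def by blast
  with assms(2) have "p = r"
    by (auto simp: prefix_def dest: length_rotations)
  with r(1) show ?thesis by simp
qed

text \<open>A full-length node is a rotation of \<open>S\<close>, so its last character is the one
  that completes the multiset of the others to that of \<open>S\<close>.\<close>
lemma trie_node_full_length_eqI:
  assumes "p \<in> trie_nodes S" "q \<in> trie_nodes S"
    and "length p = length S" "length q = length S"
    and "butlast p = butlast q" "p \<noteq> []"
  shows "p = q"
proof -
  have "p \<in> rotations S" "q \<in> rotations S"
    using assms(1-4) by (simp_all add: trie_node_full_length_in_rotations)
  then have "mset p = mset q"
    by (simp add: mset_rotations)
  moreover have "q \<noteq> []"
    using assms(3,4,6) by auto
  ultimately have "last p = last q"
    using assms(5,6) by (metis append_butlast_last_id mset_append add_left_cancel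
        mset_single_iff_right)
  with assms(5,6) \<open>q \<noteq> []\<close> show ?thesis
    by (metis append_butlast_last_id)
qed

text \<open>The characters \<open>c\<close> of the Weiner links of \<open>p\<close>. At level \<open>length S\<close>
  a link drops the last character of \<open>p\<close>, hence the truncation.\<close>
definition left_extensions :: "'a list \<Rightarrow> 'a list \<Rightarrow> 'a set" where
  "left_extensions S p = {c. c # take (length S - 1) p \<in> trie_nodes S}"

lemma weiner_link_iff:
  assumes "p \<in> trie_nodes S"
  shows "weiner_link S p q c \<longleftrightarrow> c \<in> left_extensions S p \<and> q = c # take (length S - 1) p"
proof (cases "length p < length S")
  case True
  then show ?thesis
    using assms by (auto simp: weiner_link_def left_extensions_def)
next
  case False
  with assms have "length p = length S"
    using length_trie_node_le le_neq_implies_less by blast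
  moreover have "c # p \<notin> trie_nodes S"
    using length_trie_node_le \<open>length p = length S\<close> by fastforce
  ultimately show ?thesis
    using assms by (auto simp: weiner_link_def left_extensions_def butlast_conv_take)
qed

lemma left_extensions_nonempty:
  assumes "p \<in> trie_nodes S"
  shows "left_extensions S p \<noteq> {}"
proof -
  have "S \<noteq> []"
    using assms by (auto simp: trie_nodes_def)
  then have "length (take (length S - 1) p) < length S"
    by (simp add: min_less_iff_disj)
  moreover have "take (length S - 1) p \<in> trie_nodes S"
    using assms take_is_prefix by (rule trie_nodes_prefix_closed)
  ultimately obtain d where "d # take (length S - 1) p \<in> trie_nodes S"
    by (metis trie_node_Cons_exists)
  then show ?thesis
    unfolding left_extensions_def by blast
qed

lemma unique_weiner_iff:
  assumes "p \<in> trie_nodes S"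
  shows "unique_weiner S p \<longleftrightarrow> (\<exists>c. left_extensions S p = {c})"
proof -
  have "unique_weiner S p \<longleftrightarrow> (\<forall>c \<in> left_extensions S p. \<forall>c' \<in> left_extensions S p. c = c')"
    unfolding unique_weiner_def weiner_link_iff[OF assms] by blast
  also have "\<dots> \<longleftrightarrow> (\<exists>c. left_extensions S p = {c})"
  proof
    assume all_eq: "\<forall>c \<in> left_extensions S p. \<forall>c' \<in> left_extensions S p. c = c'"
    obtain c where "c \<in> left_extensions S p"
      using left_extensions_nonempty[OF assms] by blast
    with all_eq show "\<exists>c. left_extensions S p = {c}" by blast
  qed auto
  finally show ?thesis .
qed

lemma snoc_in_trie_nodes_single_child:
  assumes "children S \<zeta> = {\<zeta> @ [c]}" "\<zeta> @ [e] \<in> trie_nodes S"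
  shows "e = c"
proof -
  have "\<zeta> @ [e] \<in> children S \<zeta>"
    using assms(2) by (simp add: children_def)
  with assms(1) show ?thesis by simp
qed

lemma single_child_in_trie_nodes:
  assumes "children S \<zeta> = {\<phi>}"
  shows "\<phi> \<in> trie_nodes S"
proof -
  have "\<phi> \<in> children S \<zeta>"
    using assms by simp
  then show ?thesis
    by (simp add: children_def)
qed

lemma left_extensions_single_child:
  assumes "\<zeta> \<in> trie_nodes S" "length \<zeta> < length S" "children S \<zeta> = {\<zeta> @ [c]}"
  shows "left_extensions S (\<zeta> @ [c]) = left_extensions S \<zeta>"
proof (cases "length \<zeta> + 1 < length S")
  case True
  have "d # \<zeta> @ [c] \<in> trie_nodes S \<longleftrightarrow> d # \<zeta> \<in> trie_nodes S" for d
  proof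
    assume "d # \<zeta> @ [c] \<in> trie_nodes S"
    then show "d # \<zeta> \<in> trie_nodes S"
      by (rule trie_nodes_prefix_closed) simp
  next
    assume "d # \<zeta> \<in> trie_nodes S"
    moreover have "length (d # \<zeta>) < length S"
      using True by simp
    ultimately obtain e where e: "(d # \<zeta>) @ [e] \<in> trie_nodes S"
      by (rule trie_node_snoc_exists)
    then have "\<zeta> @ [e] \<in> trie_nodes S"
      by (auto intro: trie_nodes_ConsD)
    with assms(3) have "e = c"
      by (rule snoc_in_trie_nodes_single_child)
    with e show "d # \<zeta> @ [c] \<in> trie_nodes S" by simp
  qed
  with True show ?thesis
    by (simp add: left_extensions_def)
next
  case False
  with assms(2) show ?thesis
    by (simp add: left_extensions_def)
qed

lemma unique_weiner_single_child_iff: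
  assumes "\<zeta> \<in> trie_nodes S" "length \<zeta> < length S" "children S \<zeta> = {\<zeta> @ [c]}"
  shows "unique_weiner S (\<zeta> @ [c]) \<longleftrightarrow> unique_weiner S \<zeta>"
proof -
  have "\<zeta> @ [c] \<in> trie_nodes S"
    using assms(3) by (rule single_child_in_trie_nodes)
  then show ?thesis
    using unique_weiner_iff[OF assms(1)] left_extensions_single_child[OF assms]
      unique_weiner_iff[of "\<zeta> @ [c]"] by simp
qed

lemma leaf_count_single_child:
  assumes "length \<zeta> < length S" "children S \<zeta> = {\<zeta> @ [c]}"
  shows "leaf_count S (\<zeta> @ [c]) = leaf_count S \<zeta>"
proof -
  have "prefix (\<zeta> @ [c]) q" if "q \<in> trie_nodes S" "length q = length S" "prefix \<zeta> q" for q
  proof -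
    from that assms(1) obtain e t where q: "q = \<zeta> @ e # t"
      by (metis append_Nil2 prefix_def nat_less_le neq_Nil_conv)
    with that(1) have "\<zeta> @ [e] \<in> trie_nodes S"
      by (auto intro: trie_nodes_prefix_closed)
    with assms(2) have "e = c"
      by (rule snoc_in_trie_nodes_single_child)
    with q show ?thesis by simp
  qed
  then have "{q \<in> trie_nodes S. length q = length S \<and> prefix (\<zeta> @ [c]) q}
      = {q \<in> trie_nodes S. length q = length S \<and> prefix \<zeta> q}"
    by (auto dest: prefix_snocD prefix_order.less_imp_le)
  then show ?thesis
    by (simp add: leaf_count_def)
qed

lemma not_has_siblings_Cons_single_child:
  assumes "children S \<zeta> = {\<zeta> @ [c]}"
  shows "\<not> has_siblings S (d # \<zeta> @ [c])"
proof
  assume "has_siblings S (d # \<zeta> @ [c])"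
  then obtain q where q: "q \<in> trie_nodes S" "q \<noteq> []" "q \<noteq> d # \<zeta> @ [c]" "butlast q = d # \<zeta>"
    unfolding has_siblings_def by auto
  then have q_eq: "q = d # \<zeta> @ [last q]"
    by (metis append_butlast_last_id append_Cons)
  with q(1) have "\<zeta> @ [last q] \<in> trie_nodes S"
    by (metis trie_nodes_ConsD)
  with assms have "last q = c"
    by (rule snoc_in_trie_nodes_single_child)
  with q(3) q_eq show False by simp
qed

lemma not_has_siblings_full_length:
  assumes "q \<in> trie_nodes S" "length q = length S"
  shows "\<not> has_siblings S q"
proof
  assume "has_siblings S q"
  then obtain q' where q': "q' \<in> trie_nodes S" "q' \<noteq> []" "q' \<noteq> q" "butlast q' = butlast q"
    and "q \<noteq> []"
    unfolding has_siblings_def by auto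
  then have "length q' = length S"
    using assms(2) by (metis length_butlast diff_Suc_1 length_greater_0_conv Suc_pred)
  with q' assms show False
    using trie_node_full_length_eqI[OF q'(1) assms(1)] by simp
qed

lemma wk_single_child_unique:
  assumes "\<zeta> \<in> trie_nodes S" "length \<zeta> < length S" "children S \<zeta> = {\<zeta> @ [c]}"
    and "unique_weiner S \<zeta>"
  shows "wk S k (\<zeta> @ [c]) = 1"
proof -
  let ?\<phi> = "\<zeta> @ [c]"
  have \<phi>_node: "?\<phi> \<in> trie_nodes S"
    using assms(3) by (rule single_child_in_trie_nodes)
  obtain d where "left_extensions S \<zeta> = {d}"
    using unique_weiner_iff[OF assms(1)] assms(4) by blast
  then have ext: "left_extensions S ?\<phi> = {d}"
    using left_extensions_single_child[OF assms(1-3)] by simp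
  let ?q = "d # take (length S - 1) ?\<phi>"
  have link: "weiner_link S ?\<phi> ?q d"
    unfolding weiner_link_iff[OF \<phi>_node] using ext by simp
  have no_siblings: "\<not> has_siblings S ?q"
  proof (cases "length \<zeta> + 1 < length S")
    case True
    then show ?thesis
      using not_has_siblings_Cons_single_child[OF assms(3)] by simp
  next
    case False
    then have "length ?q = length S"
      using assms(2) by simp
    moreover have "?q \<in> trie_nodes S"
      using link by (simp add: weiner_link_def)
    ultimately show ?thesis
      by (simp add: not_has_siblings_full_length)
  qed
  have "unique_weiner S ?\<phi>"
    using unique_weiner_single_child_iff[OF assms(1-3)] assms(4) by simp
  moreover have "\<exists>q d. weiner_link S ?\<phi> q d \<and> \<not> has_siblings S q"
    using link no_siblings by blast
  ultimately show ?thesis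
    by (simp add: wk_def)
qed

lemma wk_single_child_multiple:
  assumes "\<zeta> \<in> trie_nodes S" "length \<zeta> < length S" "children S \<zeta> = {\<zeta> @ [c]}"
    and "multiple_weiner S \<zeta>"
  shows "wk S k' (\<zeta> @ [c]) = wk S k \<zeta>"
proof -
  have "\<not> unique_weiner S (\<zeta> @ [c])"
    using unique_weiner_single_child_iff[OF assms(1-3)] assms(4)
    unfolding multiple_weiner_def by simp
  then have "wk S k' (\<zeta> @ [c]) = leaf_count S (\<zeta> @ [c])"
    by (simp add: wk_def)
  also have "\<dots> = leaf_count S \<zeta>"
    using assms(2,3) by (rule leaf_count_single_child)
  also have "\<dots> = wk S k \<zeta>"
    using assms(4) by (simp add: wk_def multiple_weiner_def)
  finally show ?thesis .
qed

theorem mainTheorem5: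
  fixes S :: "('a::{linorder,finite}) list" and dollar :: 'a
    and k :: nat and \<zeta> \<phi> :: "'a list"
  assumes "length S \<ge> 2"
    and "\<forall>x. x \<noteq> dollar \<longrightarrow> dollar < x"
    and "last S = dollar"
    and "dollar \<notin> set (butlast S)"
    and "1 \<le> k" and "k < length S"
    and "\<zeta> \<in> trie_level S k"
    and "children S \<zeta> = {\<phi>}"
  shows "(unique_weiner S \<zeta> \<longrightarrow> wk S (k+1) \<phi> = 1)
       \<and> (multiple_weiner S \<zeta> \<longrightarrow> wk S (k+1) \<phi> = wk S k \<zeta>)"
proof -
  \<comment> \<open>The argument uses only the trie structure.\<close>
  have \<zeta>_node: "\<zeta> \<in> trie_nodes S" and \<zeta>_short: "length \<zeta> < length S"
    using assms(6,7) by (auto simp: trie_level_def)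
  have "\<phi> \<in> children S \<zeta>"
    using assms(8) by simp
  then obtain c where \<phi>: "\<phi> = \<zeta> @ [c]"
    by (auto simp: children_def)
  with assms(8) have single: "children S \<zeta> = {\<zeta> @ [c]}"
    by simp
  show ?thesis
    using wk_single_child_unique[OF \<zeta>_node \<zeta>_short single]
      wk_single_child_multiple[OF \<zeta>_node \<zeta>_short single] \<phi>
    by simp
qed

end
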